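(* Let $(s_n)_{n\in\mathbb{Z}}$, $(t_n)_{n\in\mathbb{Z}}$ be strictly increasing sequences of reals with $\lim_{n\to-\infty}s_n=0$, $\lim_{n\to+\infty}s_n=\lim_{n\to-\infty}t_n=1$, $\lim_{n\to+\infty}t_n=2$, and let $X=\{0,1,2\}\cup\{s_n:n\in\mathbb{Z}\}\cup\{t_n:n\in\mathbb{Z}\}\subset[0,2]$ with the usual metric. Define $f\colon X\to X$ by $f(y)=y$ for $y\in\{0,1,2\}$, $f(s_n)=s_{n+1}$, $f(t_n)=t_{n+1}$. Then $f$ is an expansive homeomorphism which has the limit shadowing property but not the shadowing property.
   Context: A homeomorphism $f$ is expansive if there is $e>0$ such that $d(f^n(x),f^n(y))\le e$ for all $n\in\mathbb{Z}$ implies $x=y$. Shadowing property: for every $\epsilon>0$ there is $\delta>0$ such that every sequence $(x_i)_{i\ge0}$ with $d(f(x_i),x_{i+1})\le\delta$ for all $i$ admits $x$ with $d(x_i,f^i(x))\le\epsilon$ for all $i$. Limit shadowing property: every sequence with $\lim_i d(f(x_i),x_{i+1})=0$ admits $y$ with $\lim_i d(x_i,f^i(y))=0$. *)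

theory Defs
  imports "HOL-Analysis.Analysis"
begin

definition iter_int :: "'a set \<Rightarrow> ('a \<Rightarrow> 'a) \<Rightarrow> int \<Rightarrow> 'a \<Rightarrow> 'a" where
  "iter_int X f n = (if n \<ge> 0 then f ^^ nat n else (inv_into X f) ^^ nat (- n))"

definition expansive_on :: "'a::metric_space set \<Rightarrow> ('a \<Rightarrow> 'a) \<Rightarrow> bool" where
  "expansive_on X f \<longleftrightarrow> (\<exists>e>0. \<forall>x\<in>X. \<forall>y\<in>X.
      (\<forall>n::int. dist (iter_int X f n x) (iter_int X f n y) \<le> e) \<longrightarrow> x = y)"

definition shadowing_on :: "'a::metric_space set \<Rightarrow> ('a \<Rightarrow> 'a) \<Rightarrow> bool" where
  "shadowing_on X f \<longleftrightarrow> (\<forall>\<epsilon>>0. \<exists>\<delta>>0. \<forall>xs::nat \<Rightarrow> 'a.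
      (\<forall>i. xs i \<in> X) \<and> (\<forall>i. dist (f (xs i)) (xs (Suc i)) \<le> \<delta>) \<longrightarrow>
      (\<exists>x\<in>X. \<forall>i. dist (xs i) ((f ^^ i) x) \<le> \<epsilon>))"

definition limit_shadowing_on :: "'a::metric_space set \<Rightarrow> ('a \<Rightarrow> 'a) \<Rightarrow> bool" where
  "limit_shadowing_on X f \<longleftrightarrow> (\<forall>xs::nat \<Rightarrow> 'a.
      (\<forall>i. xs i \<in> X) \<and> (\<lambda>i. dist (f (xs i)) (xs (Suc i))) \<longlonglongrightarrow> 0 \<longrightarrow>
      (\<exists>y\<in>X. (\<lambda>i. dist (xs i) ((f ^^ i) y)) \<longlonglongrightarrow> 0))"

definition exX :: "(int \<Rightarrow> real) \<Rightarrow> (int \<Rightarrow> real) \<Rightarrow> real set" where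
  "exX s t = {0, 1, 2} \<union> range s \<union> range t"

definition exf :: "(int \<Rightarrow> real) \<Rightarrow> (int \<Rightarrow> real) \<Rightarrow> real \<Rightarrow> real" where
  "exf s t y = (if y \<in> range s then s ((THE n. s n = y) + 1)
                else if y \<in> range t then t ((THE n. t n = y) + 1)
                else y)"

end

theory Submission
  imports Defs
begin

text \<open>
  The space \<open>X\<close> is countable and compact, its only accumulation points are the fixed points
  \<open>0, 1, 2\<close>, and \<open>f\<close> moves every point to the right. Hence \<open>f\<close> is a continuous bijection of a
  compact space, i.e.\ a homeomorphism.

  Two distinct points either have different limits of their orbits at \<open>-\<infinity>\<close> or at \<open>+\<infinity>\<close>
  (these limits lie in \<open>{0, 1, 2}\<close>, so they differ by at least \<open>1\<close>), or lie on the same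
  \<open>s\<close>- or \<open>t\<close>-orbit, where a suitable iterate moves them to distance at least \<open>s 1 - s 0\<close>
  resp.\ \<open>t 1 - t 0\<close>.

  Since \<open>f\<close> moves points to the right, an asymptotic pseudo-orbit can cross a gap \<open>c \<notin> X\<close>
  of the closed set \<open>X\<close> only from left to right, and only while its errors are large; so it
  eventually stays on one side of every gap. As the gaps are dense, the pseudo-orbit converges,
  and by continuity its limit is a fixed point, whose constant orbit limit-shadows it.

  Shadowing fails: a \<open>\<delta>\<close>-pseudo-orbit may jump from some \<open>s p\<close> close to \<open>1\<close> to some
  \<open>t q\<close> close to \<open>1\<close>, while no true orbit crosses \<open>1\<close>.
\<close>

lemma strict_mono_int_bounds:
  fixes u :: "int \<Rightarrow> real"
  assumes "strict_mono u" and "(u \<longlongrightarrow> a) at_bot" and "(u \<longlongrightarrow> b) at_top"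
  shows "a < u n" and "u n < b"
proof -
  have "u (n - 1) < u n" and "u n < u (n + 1)"
    using assms(1) by (simp_all add: strict_mono_less)
  moreover have "a \<le> u (n - 1)"
    using assms(1,2) by (intro tendsto_upperbound[of u a at_bot])
      (auto simp: eventually_at_bot_linorder strict_mono_less_eq intro!: exI[of _ "n - 1"])
  moreover have "u (n + 1) \<le> b"
    using assms(1,3) by (intro tendsto_lowerbound[of u b at_top])
      (auto simp: eventually_at_top_linorder strict_mono_less_eq intro!: exI[of _ "n + 1"])
  ultimately show "a < u n" and "u n < b"
    by linarith+
qed

lemma tendsto_shift_int_at_top:
  fixes u :: "int \<Rightarrow> 'a::topological_space"
  assumes "(u \<longlongrightarrow> l) at_top"
  shows "((\<lambda>n. u (a + n)) \<longlongrightarrow> l) at_top"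
proof -
  have "filterlim (\<lambda>n. a + n) at_top at_top"
    unfolding filterlim_at_top eventually_at_top_linorder
    by (metis add.commute diff_le_eq)
  then show ?thesis
    using assms by (rule filterlim_compose[of u, rotated])
qed

lemma tendsto_shift_int_at_bot:
  fixes u :: "int \<Rightarrow> 'a::topological_space"
  assumes "(u \<longlongrightarrow> l) at_bot"
  shows "((\<lambda>n. u (a + n)) \<longlongrightarrow> l) at_bot"
proof -
  have "filterlim (\<lambda>n. a + n) at_bot at_bot"
    unfolding filterlim_at_bot eventually_at_bot_linorder
    by (metis add.commute le_diff_eq)
  then show ?thesis
    using assms by (rule filterlim_compose[of u, rotated])
qed

lemma finite_if_eventually_at_bot_at_top:
  fixes P Q :: "int \<Rightarrow> bool"
  assumes "eventually P at_bot" and "eventually Q at_top"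
  shows "finite {n. \<not> P n \<and> \<not> Q n}"
proof -
  obtain M N where "\<forall>n\<le>M. P n" and "\<forall>n\<ge>N. Q n"
    using assms by (auto simp: eventually_at_bot_linorder eventually_at_top_linorder)
  then have "{n. \<not> P n \<and> \<not> Q n} \<subseteq> {M..N}"
    by (metis (mono_tags, lifting) atLeastAtMost_iff mem_Collect_eq nle_le subsetI)
  then show ?thesis
    using finite_subset by blast
qed

lemma islimpt_range_two_sided_limits:
  fixes u :: "int \<Rightarrow> 'a::metric_space"
  assumes "(u \<longlongrightarrow> a) at_bot" and "(u \<longlongrightarrow> b) at_top" and "z islimpt range u"
  shows "z = a \<or> z = b"
proof (rule ccontr)
  assume "\<not> (z = a \<or> z = b)"
  define r where "r = min (dist z a) (dist z b) / 2"
  have "r > 0"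
    using \<open>\<not> (z = a \<or> z = b)\<close> by (simp add: r_def)
  have "range u \<inter> ball z r \<subseteq> u ` {n. \<not> dist (u n) a < r \<and> \<not> dist (u n) b < r}"
  proof
    fix y
    assume "y \<in> range u \<inter> ball z r"
    then obtain n where "y = u n" and "dist z (u n) < r"
      by auto
    moreover have "dist z a \<le> dist z (u n) + dist (u n) a" and "dist z b \<le> dist z (u n) + dist (u n) b"
      by (fact dist_triangle)+
    ultimately show "y \<in> u ` {n. \<not> dist (u n) a < r \<and> \<not> dist (u n) b < r}"
      by (auto simp: r_def)
  qed
  moreover have "finite {n. \<not> dist (u n) a < r \<and> \<not> dist (u n) b < r}"
    using assms(1,2) \<open>r > 0\<close> by (intro finite_if_eventually_at_bot_at_top) (auto dest: tendstoD)
  ultimately have "finite (range u \<inter> ball z r)"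
    using finite_subset by blast
  with assms(3) \<open>r > 0\<close> show False
    by (auto simp: islimpt_eq_infinite_ball)
qed

lemma strict_mono_shifted_dist_ge:
  fixes u :: "int \<Rightarrow> real"
  assumes "strict_mono u" and "a \<noteq> b"
  shows "\<exists>n. u 1 - u 0 \<le> dist (u (a + n)) (u (b + n))"
proof -
  have "u 1 - u 0 \<le> dist (u (a + (- min a b))) (u (b + (- min a b)))"
    using assms strict_mono_less_eq[OF assms(1), of 1 "\<bar>a - b\<bar>"]
    by (cases "a < b") (auto simp: dist_real_def min_def)
  then show ?thesis ..
qed

lemma continuous_at_fixpoint_of_rightward:
  fixes F :: "real \<Rightarrow> real"
  assumes "\<forall>x\<in>X. x \<le> F x" and "F c = c"
    and "\<And>e. e > 0 \<Longrightarrow> \<exists>p>c. \<forall>y\<in>X. y < p \<longrightarrow> F y < c + e"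
  shows "continuous (at c within X) F"
  unfolding continuous_within_eps_delta
proof (intro allI impI)
  fix e :: real
  assume "e > 0"
  then obtain p where "p > c" and p: "\<forall>y\<in>X. y < p \<longrightarrow> F y < c + e"
    using assms(3) by blast
  have "\<forall>y\<in>X. dist y c < min (p - c) e \<longrightarrow> dist (F y) (F c) < e"
    using assms(1,2) p by (force simp: dist_real_def)
  then show "\<exists>d>0. \<forall>y\<in>X. dist y c < d \<longrightarrow> dist (F y) (F c) < e"
    using \<open>p > c\<close> \<open>e > 0\<close> by (intro exI[of _ "min (p - c) e"]) auto
qed

lemma asymptotic_pseudo_orbit_eventually_one_side:
  fixes F :: "real \<Rightarrow> real" and xs :: "nat \<Rightarrow> real"
  assumes "closed X" and "c \<notin> X" and "\<forall>x\<in>X. x \<le> F x" and "\<forall>i. xs i \<in> X"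
    and "(\<lambda>i. dist (F (xs i)) (xs (Suc i))) \<longlonglongrightarrow> 0"
  shows "eventually (\<lambda>i. c < xs i) sequentially \<or> eventually (\<lambda>i. xs i < c) sequentially"
proof -
  obtain \<eta> where "\<eta> > 0" and gap: "ball c \<eta> \<inter> X = {}"
    using assms(1,2) by (metis open_contains_ball_eq open_Compl Int_emptyI ComplI subsetD ComplD)
  have far: "\<eta> \<le> \<bar>xs i - c\<bar>" for i
  proof -
    have "xs i \<notin> ball c \<eta>"
      using gap assms(4) by blast
    then show ?thesis
      by (simp add: dist_real_def)
  qed
  obtain N where N: "\<forall>i\<ge>N. dist (F (xs i)) (xs (Suc i)) < \<eta>"
    using order_tendstoD(2)[OF assms(5) \<open>\<eta> > 0\<close>] by (auto simp: eventually_sequentially)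
  show ?thesis
  proof (cases "\<exists>i\<ge>N. c < xs i")
    case True
    then obtain i0 where "i0 \<ge> N" and "c < xs i0"
      by blast
    have "c < xs j" if "i0 \<le> j" for j
      using that
    proof (induction j rule: dec_induct)
      case base
      show ?case by (fact \<open>c < xs i0\<close>)
    next
      case (step j)
      \<comment> \<open>Being on the right of the gap, \<open>xs j \<ge> c + \<eta>\<close>; one step loses less than \<open>\<eta>\<close>.\<close>
      have "c + \<eta> \<le> xs j"
        using far[of j] step.IH by linarith
      moreover have "dist (F (xs j)) (xs (Suc j)) < \<eta>"
        using N step.hyps \<open>i0 \<ge> N\<close> by simp
      moreover have "xs j \<le> F (xs j)"
        using assms(3,4) by blast
      ultimately show ?case
        by (simp add: dist_real_def)
    qed
    then show ?thesis
      by (auto simp: eventually_sequentially)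
  next
    case False
    then have "\<forall>i\<ge>N. xs i < c"
      using far \<open>\<eta> > 0\<close> by (metis abs_0 diff_self linorder_neqE_linordered_idom not_le)
    then show ?thesis
      by (auto simp: eventually_sequentially)
  qed
qed

lemma eventually_gt_if_subseq_limit_gt:
  fixes xs :: "nat \<Rightarrow> real"
  assumes "eventually (\<lambda>i. c < xs i) sequentially \<or> eventually (\<lambda>i. xs i < c) sequentially"
    and "strict_mono r" and "(xs \<circ> r) \<longlonglongrightarrow> L" and "c < L"
  shows "eventually (\<lambda>i. c < xs i) sequentially"
proof -
  have "\<not> eventually (\<lambda>i. xs i < c) sequentially"
  proof
    assume "eventually (\<lambda>i. xs i < c) sequentially"
    then have "eventually (\<lambda>k. xs (r k) < c) sequentially"
      using eventually_subseq[OF assms(2)] by blast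
    moreover have "eventually (\<lambda>k. c < xs (r k)) sequentially"
      using order_tendstoD(1)[OF assms(3,4)] by (simp add: o_def)
    ultimately have "eventually (\<lambda>k. False) sequentially"
      by eventually_elim auto
    then show False
      by simp
  qed
  with assms(1) show ?thesis
    by blast
qed

lemma asymptotic_pseudo_orbit_converges_to_fixpoint:
  fixes F :: "real \<Rightarrow> real" and xs :: "nat \<Rightarrow> real"
  assumes "compact X" and "countable X" and "continuous_on X F" and "\<forall>x\<in>X. x \<le> F x"
    and xs: "\<forall>i. xs i \<in> X" and err: "(\<lambda>i. dist (F (xs i)) (xs (Suc i))) \<longlonglongrightarrow> 0"
  shows "\<exists>L\<in>X. F L = L \<and> xs \<longlonglongrightarrow> L"
proof -
  have side: "eventually (\<lambda>i. c < xs i) sequentially \<or> eventually (\<lambda>i. xs i < c) sequentially"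
    if "c \<notin> X" for c
    using compact_imp_closed[OF assms(1)] that assms(4) xs err
    by (rule asymptotic_pseudo_orbit_eventually_one_side)
  obtain L r where "L \<in> X" and "strict_mono r" and sub: "(xs \<circ> r) \<longlonglongrightarrow> L"
    using compact_imp_seq_compact[OF assms(1)] xs by (metis seq_compactE)
  \<comment> \<open>Gaps \<open>c \<notin> X\<close> are dense, and each one is eventually not crossed.\<close>
  have "eventually (\<lambda>i. a < xs i) sequentially" if "a < L" for a
  proof -
    obtain c where "a < c" "c < L" "c \<notin> X"
      using real_interval_avoid_countable_set[OF \<open>a < L\<close> assms(2)] by auto
    from eventually_gt_if_subseq_limit_gt[OF side[OF \<open>c \<notin> X\<close>] \<open>strict_mono r\<close> sub \<open>c < L\<close>]
    show ?thesis
      by eventually_elim (use \<open>a < c\<close> in auto)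
  qed
  moreover have "eventually (\<lambda>i. xs i < b) sequentially" if "L < b" for b
  proof -
    obtain c where "L < c" "c < b" "c \<notin> X"
      using real_interval_avoid_countable_set[OF \<open>L < b\<close> assms(2)] by auto
    have "eventually (\<lambda>i. - c < - xs i) sequentially"
      using side[OF \<open>c \<notin> X\<close>] \<open>strict_mono r\<close> tendsto_minus[OF sub] \<open>L < c\<close>
      by (intro eventually_gt_if_subseq_limit_gt[of _ "\<lambda>i. - xs i" r "- L"]) (auto simp: o_def)
    then show ?thesis
      by eventually_elim (use \<open>c < b\<close> in auto)
  qed
  ultimately have "xs \<longlonglongrightarrow> L"
    by (rule order_tendstoI)
  have "(\<lambda>i. F (xs i)) \<longlonglongrightarrow> F L"
    using continuous_on_tendsto_compose[OF assms(3) \<open>xs \<longlonglongrightarrow> L\<close> \<open>L \<in> X\<close>] xs by simp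
  then have "(\<lambda>i. dist (F (xs i)) (xs (Suc i))) \<longlonglongrightarrow> dist (F L) L"
    using \<open>xs \<longlonglongrightarrow> L\<close> by (intro tendsto_dist) (simp_all add: LIMSEQ_Suc)
  with err have "F L = L"
    using LIMSEQ_unique by fastforce
  with \<open>L \<in> X\<close> \<open>xs \<longlonglongrightarrow> L\<close> show ?thesis
    by blast
qed

lemma limit_shadowing_on_if_rightward:
  fixes F :: "real \<Rightarrow> real"
  assumes "compact X" and "countable X" and "continuous_on X F" and "\<forall>x\<in>X. x \<le> F x"
  shows "limit_shadowing_on X F"
  unfolding limit_shadowing_on_def
proof (intro allI impI)
  fix xs :: "nat \<Rightarrow> real"
  assume "(\<forall>i. xs i \<in> X) \<and> (\<lambda>i. dist (F (xs i)) (xs (Suc i))) \<longlonglongrightarrow> 0"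
  then obtain L where "L \<in> X" "F L = L" "xs \<longlonglongrightarrow> L"
    using asymptotic_pseudo_orbit_converges_to_fixpoint[OF assms] by blast
  moreover from \<open>F L = L\<close> have "(F ^^ i) L = L" for i
    by (induction i) auto
  ultimately have "(\<lambda>i. dist (xs i) ((F ^^ i) L)) \<longlonglongrightarrow> 0"
    by (simp add: tendsto_dist_iff[symmetric])
  with \<open>L \<in> X\<close> show "\<exists>y\<in>X. (\<lambda>i. dist (xs i) ((F ^^ i) y)) \<longlonglongrightarrow> 0"
    by blast
qed

locale two_orbit_system =
  fixes s t :: "int \<Rightarrow> real"
  assumes s_mono: "strict_mono s" and t_mono: "strict_mono t"
    and s_at_bot: "(s \<longlongrightarrow> 0) at_bot" and s_at_top: "(s \<longlongrightarrow> 1) at_top"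
    and t_at_bot: "(t \<longlongrightarrow> 1) at_bot" and t_at_top: "(t \<longlongrightarrow> 2) at_top"
begin

abbreviation "X \<equiv> exX s t"
abbreviation "F \<equiv> exf s t"

lemma s_bounds: "0 < s n" "s n < 1"
  using strict_mono_int_bounds[OF s_mono s_at_bot s_at_top] by auto

lemma t_bounds: "1 < t n" "t n < 2"
  using strict_mono_int_bounds[OF t_mono t_at_bot t_at_top] by auto

lemma s_eq_iff [simp]: "s a = s b \<longleftrightarrow> a = b"
  and s_less_iff [simp]: "s a < s b \<longleftrightarrow> a < b"
  and s_le_iff [simp]: "s a \<le> s b \<longleftrightarrow> a \<le> b"
  using s_mono by (simp_all add: strict_mono_eq strict_mono_less strict_mono_less_eq)

lemma t_eq_iff [simp]: "t a = t b \<longleftrightarrow> a = b"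
  and t_less_iff [simp]: "t a < t b \<longleftrightarrow> a < b"
  and t_le_iff [simp]: "t a \<le> t b \<longleftrightarrow> a \<le> b"
  using t_mono by (simp_all add: strict_mono_eq strict_mono_less strict_mono_less_eq)

lemma s_neq [simp]: "s a \<noteq> t b" "s a \<noteq> 0" "s a \<noteq> 1" "s a \<noteq> 2"
  using s_bounds[of a] t_bounds[of b] by auto

lemma t_neq [simp]: "t a \<noteq> s b" "t a \<noteq> 0" "t a \<noteq> 1" "t a \<noteq> 2"
  using s_bounds[of b] t_bounds[of a] by auto

lemma not_in_range [simp]:
  "s a \<notin> range t" "t a \<notin> range s"
  "0 \<notin> range s" "1 \<notin> range s" "2 \<notin> range s"
  "0 \<notin> range t" "1 \<notin> range t" "2 \<notin> range t"
  by (auto simp: image_iff dest: sym)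

lemma F_s [simp]: "F (s n) = s (n + 1)"
  by (simp add: exf_def)

lemma F_t [simp]: "F (t n) = t (n + 1)"
  by (auto simp: exf_def dest: sym)

lemma F_fixed [simp]: "F 0 = 0" "F 1 = 1" "F 2 = 2"
  by (auto simp: exf_def dest: sym)

lemma X_cases [consumes 1, case_names zero one two s t]:
  assumes "x \<in> X"
  obtains "x = 0" | "x = 1" | "x = 2" | a where "x = s a" | a where "x = t a"
  using assms unfolding exX_def by auto

lemma in_X [simp]: "0 \<in> X" "1 \<in> X" "2 \<in> X" "s a \<in> X" "t a \<in> X"
  by (simp_all add: exX_def)

lemma inj_on_F: "inj_on F X"
  by (auto intro!: inj_onI elim!: X_cases)

lemma image_F: "F ` X = X"
proof (intro equalityI subsetI)
  fix y
  assume "y \<in> X"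
  then show "y \<in> F ` X"
  proof (cases rule: X_cases)
    case (s a)
    then show ?thesis using F_s[of "a - 1"] in_X(4)[of "a - 1"] by (metis diff_add_cancel image_eqI)
  next
    case (t a)
    then show ?thesis using F_t[of "a - 1"] in_X(5)[of "a - 1"] by (metis diff_add_cancel image_eqI)
  qed (use F_fixed in_X in \<open>metis image_eqI\<close>)+
qed (auto elim!: X_cases)

lemma X_subset: "X \<subseteq> {0..2}"
proof
  fix x
  assume "x \<in> X"
  then show "x \<in> {0..2}"
  proof (cases rule: X_cases)
    case (s a)
    then show ?thesis using s_bounds[of a] by simp
  next
    case (t a)
    then show ?thesis using t_bounds[of a] by simp
  qed auto
qed

lemma countable_X: "countable X"
  by (simp add: exX_def)

lemma islimpt_X: "z islimpt X \<Longrightarrow> z \<in> {0, 1, 2}"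
  using islimpt_range_two_sided_limits[OF s_at_bot s_at_top]
    islimpt_range_two_sided_limits[OF t_at_bot t_at_top]
  by (auto simp: exX_def islimpt_Un islimpt_insert)

lemma compact_X: "compact X"
proof -
  have "closed X"
    using islimpt_X by (metis closed_limpt empty_iff insertE in_X(1-3))
  moreover have "bounded X"
    using X_subset bounded_closed_interval bounded_subset by blast
  ultimately show ?thesis
    by (simp add: compact_eq_bounded_closed)
qed

lemma le_F: "x \<in> X \<Longrightarrow> x \<le> F x"
  by (auto elim!: X_cases)

lemma F_upper_bound_near_fixpoint:
  assumes "c \<in> {0, 1, 2}" and "e > 0"
  shows "\<exists>p>c. \<forall>y\<in>X. y < p \<longrightarrow> F y < c + e"
proof -
  consider "c = 0" | "c = 1" | "c = 2"
    using assms(1) by blast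
  then show ?thesis
  proof cases
    case 1
    obtain N where N: "s N < e"
      using order_tendstoD(2)[OF s_at_bot \<open>e > 0\<close>] by (auto simp: eventually_at_bot_linorder)
    have "F y < e" if "y \<in> X" and "y < s (N - 1)" for y
      using that(1)
    proof (cases rule: X_cases)
      case (s a)
      with that(2) have "s (a + 1) < s N"
        by simp
      with s N show ?thesis
        by (metis F_s less_trans)
    next
      case (t a)
      then show ?thesis
        using that(2) s_bounds[of "N - 1"] t_bounds[of a] by simp
    qed (use that(2) s_bounds[of "N - 1"] \<open>e > 0\<close> in auto)
    then show ?thesis
      using s_bounds 1 by auto
  next
    case 2
    obtain N where N: "t N < 1 + e"
      using order_tendstoD(2)[OF t_at_bot, of "1 + e"] \<open>e > 0\<close> by (auto simp: eventually_at_bot_linorder)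
    have "F y < 1 + e" if "y \<in> X" and "y < t (N - 1)" for y
      using that(1)
    proof (cases rule: X_cases)
      case (s a)
      then show ?thesis
        using s_bounds[of "a + 1"] \<open>e > 0\<close> by simp
    next
      case (t a)
      with that(2) have "t (a + 1) < t N"
        by simp
      with t N show ?thesis
        by (metis F_t add.commute add_strict_left_mono less_trans)
    qed (use that(2) t_bounds[of "N - 1"] \<open>e > 0\<close> in auto)
    then show ?thesis
      using t_bounds 2 by auto
  next
    case 3
    have "F y < 2 + e" if "y \<in> X" for y
    proof -
      have "F y \<in> X"
        using that image_F by blast
      then show ?thesis
        using X_subset \<open>e > 0\<close> by fastforce
    qed
    then show ?thesis
      using 3 by (auto intro!: exI[of _ 3])
  qed
qed

lemma continuous_on_F: "continuous_on X F"
proof (rule continuous_on_eq_continuous_within[THEN iffD2], intro ballI)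
  fix x
  assume "x \<in> X"
  show "continuous (at x within X) F"
  proof (cases "x islimpt X")
    case True
    then have "x \<in> {0, 1, 2}"
      by (rule islimpt_X)
    then show ?thesis
      using le_F F_upper_bound_near_fixpoint
      by (intro continuous_at_fixpoint_of_rightward) auto
  next
    case False
    then show ?thesis
      by (simp add: continuous_within trivial_limit_within[THEN iffD2])
  qed
qed

lemma homeomorphism_F: "\<exists>g. homeomorphism X X F g"
  using homeomorphism_compact[OF compact_X continuous_on_F image_F inj_on_F] .

lemma funpow_F_s [simp]: "(F ^^ k) (s a) = s (a + int k)"
  by (induction k) (simp_all add: add.assoc)

lemma funpow_F_t [simp]: "(F ^^ k) (t a) = t (a + int k)"
  by (induction k) (simp_all add: add.assoc)

lemma funpow_F_fixed [simp]: "(F ^^ k) 0 = 0" "(F ^^ k) 1 = 1" "(F ^^ k) 2 = 2"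
  by (induction k) simp_all

lemma inv_F_s [simp]: "inv_into X F (s a) = s (a - 1)"
  by (rule inv_into_f_eq[OF inj_on_F]) simp_all

lemma inv_F_t [simp]: "inv_into X F (t a) = t (a - 1)"
  by (rule inv_into_f_eq[OF inj_on_F]) simp_all

lemma inv_F_fixed [simp]: "inv_into X F 0 = 0" "inv_into X F 1 = 1" "inv_into X F 2 = 2"
  by (rule inv_into_f_eq[OF inj_on_F]; simp)+

lemma iter_int_F_s [simp]: "iter_int X F n (s a) = s (a + n)"
proof -
  have "(inv_into X F ^^ k) (s a) = s (a - int k)" for k
    by (induction k) (simp_all add: algebra_simps)
  then show ?thesis
    by (simp add: iter_int_def)
qed

lemma iter_int_F_t [simp]: "iter_int X F n (t a) = t (a + n)"
proof -
  have "(inv_into X F ^^ k) (t a) = t (a - int k)" for k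
    by (induction k) (simp_all add: algebra_simps)
  then show ?thesis
    by (simp add: iter_int_def)
qed

lemma iter_int_F_fixed [simp]: "iter_int X F n 0 = 0" "iter_int X F n 1 = 1" "iter_int X F n 2 = 2"
proof -
  have "(inv_into X F ^^ k) 0 = 0" "(inv_into X F ^^ k) 1 = 1" "(inv_into X F ^^ k) 2 = 2" for k
    by (induction k) simp_all
  then show "iter_int X F n 0 = 0" "iter_int X F n 1 = 1" "iter_int X F n 2 = 2"
    by (simp_all add: iter_int_def)
qed

definition alpha_limit :: "real \<Rightarrow> real" where
  "alpha_limit x = (if x \<in> range s then 0 else if x \<in> range t then 1 else x)"

definition omega_limit :: "real \<Rightarrow> real" where
  "omega_limit x = (if x \<in> range s then 1 else if x \<in> range t then 2 else x)"

lemma orbit_tendsto_alpha_limit: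
  assumes "x \<in> X"
  shows "((\<lambda>n. iter_int X F n x) \<longlongrightarrow> alpha_limit x) at_bot"
  using assms by (cases rule: X_cases)
    (simp_all add: alpha_limit_def tendsto_shift_int_at_bot[OF s_at_bot] tendsto_shift_int_at_bot[OF t_at_bot])

lemma orbit_tendsto_omega_limit:
  assumes "x \<in> X"
  shows "((\<lambda>n. iter_int X F n x) \<longlongrightarrow> omega_limit x) at_top"
  using assms by (cases rule: X_cases)
    (simp_all add: omega_limit_def tendsto_shift_int_at_top[OF s_at_top] tendsto_shift_int_at_top[OF t_at_top])

lemma orbit_limits_separate:
  assumes "x \<in> X" and "y \<in> X" and "x \<noteq> y"
    and "\<not> (x \<in> range s \<and> y \<in> range s)" and "\<not> (x \<in> range t \<and> y \<in> range t)"
  shows "1 \<le> dist (alpha_limit x) (alpha_limit y) \<or> 1 \<le> dist (omega_limit x) (omega_limit y)"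
  using assms(1)
proof (cases rule: X_cases)
  case (s a)
  with assms(2-) show ?thesis
    by (cases rule: X_cases) (auto simp: alpha_limit_def omega_limit_def dist_real_def)
next
  case (t a)
  with assms(2-) show ?thesis
    by (cases rule: X_cases) (auto simp: alpha_limit_def omega_limit_def dist_real_def)
qed (use assms(2-) in \<open>cases rule: X_cases; auto simp: alpha_limit_def omega_limit_def dist_real_def\<close>)+

lemma expansive_F: "expansive_on X F"
proof -
  define e where "e = min (1 / 2) (min ((s 1 - s 0) / 2) ((t 1 - t 0) / 2))"
  have "0 < s 1 - s 0" "0 < t 1 - t 0"
    by simp_all
  then have "e > 0" "e < 1" "e < s 1 - s 0" "e < t 1 - t 0"
    by (simp_all add: e_def min_less_iff_disj)
  have "x = y" if "x \<in> X" "y \<in> X"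
    and close: "\<forall>n. dist (iter_int X F n x) (iter_int X F n y) \<le> e" for x y
  proof (rule ccontr)
    assume "x \<noteq> y"
    consider a b where "x = s a" "y = s b" | a b where "x = t a" "y = t b"
      | "\<not> (x \<in> range s \<and> y \<in> range s)" "\<not> (x \<in> range t \<and> y \<in> range t)"
      by blast
    then show False
    proof cases
      case 1
      with \<open>x \<noteq> y\<close> have "a \<noteq> b"
        by blast
      then obtain n where "s 1 - s 0 \<le> dist (s (a + n)) (s (b + n))"
        using strict_mono_shifted_dist_ge[OF s_mono] by blast
      with close 1 \<open>e < s 1 - s 0\<close> show False
        by (metis iter_int_F_s not_le order.strict_trans2)
    next
      case 2
      with \<open>x \<noteq> y\<close> have "a \<noteq> b"
        by blast
      then obtain n where "t 1 - t 0 \<le> dist (t (a + n)) (t (b + n))"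
        using strict_mono_shifted_dist_ge[OF t_mono] by blast
      with close 2 \<open>e < t 1 - t 0\<close> show False
        by (metis iter_int_F_t not_le order.strict_trans2)
    next
      case 3
      \<comment> \<open>Orbits with different limits at \<open>-\<infinity>\<close> or \<open>+\<infinity>\<close> end up at distance \<open>\<ge> 1 > e\<close>.\<close>
      have "dist (alpha_limit x) (alpha_limit y) \<le> e"
        using tendsto_dist[OF orbit_tendsto_alpha_limit orbit_tendsto_alpha_limit, OF that(1,2)] close
        by (intro tendsto_upperbound) auto
      moreover have "dist (omega_limit x) (omega_limit y) \<le> e"
        using tendsto_dist[OF orbit_tendsto_omega_limit orbit_tendsto_omega_limit, OF that(1,2)] close
        by (intro tendsto_upperbound) auto
      ultimately show False
        using orbit_limits_separate[OF that(1,2) \<open>x \<noteq> y\<close> 3] \<open>e < 1\<close> by linarith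
    qed
  qed
  with \<open>e > 0\<close> show ?thesis
    unfolding expansive_on_def by blast
qed

lemma limit_shadowing_F: "limit_shadowing_on X F"
  using compact_X countable_X continuous_on_F le_F
  by (intro limit_shadowing_on_if_rightward) auto

lemma funpow_F_less_1:
  assumes "x \<in> X" and "x < 1"
  shows "(F ^^ k) x < 1"
  using assms
proof (cases rule: X_cases)
  case (t a)
  with assms(2) show ?thesis
    using t_bounds[of a] by simp
qed (simp_all add: s_bounds)

lemma not_shadowing_F: "\<not> shadowing_on X F"
proof
  assume "shadowing_on X F"
  define \<epsilon> where "\<epsilon> = min (1 - s 0) (t 0 - 1) / 2"
  have "\<epsilon> > 0" "\<epsilon> < 1 - s 0" "\<epsilon> < t 0 - 1"
    using s_bounds[of 0] t_bounds[of 0] by (auto simp: \<epsilon>_def min_def)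
  then obtain \<delta> where "\<delta> > 0" and shadow: "\<And>xs. (\<forall>i. xs i \<in> X) \<and> (\<forall>i. dist (F (xs i)) (xs (Suc i)) \<le> \<delta>)
      \<Longrightarrow> \<exists>x\<in>X. \<forall>i. dist (xs i) ((F ^^ i) x) \<le> \<epsilon>"
    using \<open>shadowing_on X F\<close> unfolding shadowing_on_def by metis
  \<comment> \<open>A \<open>\<delta>\<close>-pseudo orbit runs up the \<open>s\<close>-orbit from \<open>s 0\<close>, jumps over \<open>1\<close> from \<open>s p\<close> to
    \<open>t q\<close> and then runs up the \<open>t\<close>-orbit through \<open>t 0\<close>; true orbits cannot pass \<open>1\<close>.\<close>
  obtain p where "p \<ge> 1" "1 - \<delta> / 2 < s p"
  proof -
    obtain N where "\<forall>n\<ge>N. 1 - \<delta> / 2 < s n"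
      using order_tendstoD(1)[OF s_at_top, of "1 - \<delta> / 2"] \<open>\<delta> > 0\<close>
      by (auto simp: eventually_at_top_linorder)
    then show thesis
      using that[of "max N 1"] by simp
  qed
  obtain q where "q \<le> 0" "t q < 1 + \<delta> / 2"
  proof -
    obtain N where "\<forall>n\<le>N. t n < 1 + \<delta> / 2"
      using order_tendstoD(2)[OF t_at_bot, of "1 + \<delta> / 2"] \<open>\<delta> > 0\<close>
      by (auto simp: eventually_at_bot_linorder)
    then show thesis
      using that[of "min N 0"] by simp
  qed
  define xs where "xs i = (if int i < p then s (int i) else t (q + int i - p))" for i
  have "xs i \<in> X" for i
    by (simp add: xs_def)
  moreover have "dist (F (xs i)) (xs (Suc i)) \<le> \<delta>" for i
  proof -
    consider "int i + 1 < p" | "int i + 1 = p" | "int i \<ge> p"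
      by linarith
    then show ?thesis
    proof cases
      case 1
      then show ?thesis
        using \<open>\<delta> > 0\<close> by (simp add: xs_def add.commute)
    next
      case 2
      then have "F (xs i) = s p" and "xs (Suc i) = t q"
        by (auto simp: xs_def)
      then show ?thesis
        using \<open>1 - \<delta> / 2 < s p\<close> \<open>t q < 1 + \<delta> / 2\<close> s_bounds[of p] t_bounds[of q]
        by (simp add: dist_real_def)
    next
      case 3
      then show ?thesis
        using \<open>\<delta> > 0\<close> by (simp add: xs_def algebra_simps)
    qed
  qed
  ultimately obtain x where "x \<in> X" and x: "\<forall>i. dist (xs i) ((F ^^ i) x) \<le> \<epsilon>"
    using shadow[of xs] by blast
  have "xs 0 = s 0"
    using \<open>p \<ge> 1\<close> by (simp add: xs_def)
  with x[rule_format, of 0] \<open>\<epsilon> < 1 - s 0\<close> have "x < 1"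
    by (simp add: dist_real_def)
  have "xs (nat (p - q)) = t 0"
    using \<open>p \<ge> 1\<close> \<open>q \<le> 0\<close> by (simp add: xs_def)
  with x[rule_format, of "nat (p - q)"] \<open>\<epsilon> < t 0 - 1\<close> funpow_F_less_1[OF \<open>x \<in> X\<close> \<open>x < 1\<close>]
  show False
    by (smt (verit) dist_real_def)
qed

end

theorem mainTheorem13:
  fixes s t :: "int \<Rightarrow> real"
  assumes "strict_mono s" and "strict_mono t"
    and "(s \<longlongrightarrow> 0) at_bot" and "(s \<longlongrightarrow> 1) at_top"
    and "(t \<longlongrightarrow> 1) at_bot" and "(t \<longlongrightarrow> 2) at_top"
  shows "(\<exists>g. homeomorphism (exX s t) (exX s t) (exf s t) g)
         \<and> expansive_on (exX s t) (exf s t)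
         \<and> limit_shadowing_on (exX s t) (exf s t)
         \<and> \<not> shadowing_on (exX s t) (exf s t)"
proof -
  interpret two_orbit_system s t
    using assms by unfold_locales
  show ?thesis
    using homeomorphism_F expansive_F limit_shadowing_F not_shadowing_F by blast
qed

end
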